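(* The construction of a triangle from the feet of its internal angle bisectors by compass and straightedge is impossible in general. Precisely: there exists a triangle $ABC$ in the Euclidean plane such that no compass-and-straightedge construction starting from the points $A$, $B$, $C$ produces the vertices of a triangle $A'B'C'$ whose internal angle bisectors are the segments $A'A$, $B'B$, $C'C$ (that is, $A$ lies on segment $B'C'$ with $A'A$ bisecting angle $B'A'C'$, $B$ lies on segment $C'A'$ with $B'B$ bisecting angle $C'B'A'$, and $C$ lies on segment $A'B'$ with $C'C$ bisecting angle $A'C'B'$).
   Context: Compass-and-straightedge constructibility is meant in the classical sense: starting from the given points $A$, $B$, $C$, one may draw lines through two already constructed points and circles with an already constructed center passing through an already constructed point, and add intersection points of these lines and circles as newly constructed points. *)

theory Defs
  imports "HOL-Analysis.Analysis"
begin

definition line_through :: "complex \<Rightarrow> complex \<Rightarrow> complex set" where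
  "line_through p q = {z. \<exists>t::real. z = p + of_real t * (q - p)}"

definition circle_through :: "complex \<Rightarrow> complex \<Rightarrow> complex set" where
  "circle_through c r = {z. dist z c = dist r c}"

inductive_set constructible :: "complex set \<Rightarrow> complex set" for S where
  base: "z \<in> S \<Longrightarrow> z \<in> constructible S"
| line_line: "\<lbrakk>a \<in> constructible S; b \<in> constructible S; c \<in> constructible S;
     d \<in> constructible S; a \<noteq> b; c \<noteq> d; line_through a b \<noteq> line_through c d;
     z \<in> line_through a b; z \<in> line_through c d\<rbrakk> \<Longrightarrow> z \<in> constructible S"
| line_circle: "\<lbrakk>a \<in> constructible S; b \<in> constructible S; c \<in> constructible S;
     r \<in> constructible S; a \<noteq> b; c \<noteq> r;
     z \<in> line_through a b; z \<in> circle_through c r\<rbrakk> \<Longrightarrow> z \<in> constructible S"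
| circle_circle: "\<lbrakk>c1 \<in> constructible S; r1 \<in> constructible S; c2 \<in> constructible S;
     r2 \<in> constructible S; c1 \<noteq> r1; c2 \<noteq> r2;
     circle_through c1 r1 \<noteq> circle_through c2 r2;
     z \<in> circle_through c1 r1; z \<in> circle_through c2 r2\<rbrakk> \<Longrightarrow> z \<in> constructible S"

definition vangle :: "complex \<Rightarrow> complex \<Rightarrow> real" where
  "vangle u v = arccos ((u \<bullet> v) / (norm u * norm v))"

definition angle :: "complex \<Rightarrow> complex \<Rightarrow> complex \<Rightarrow> real" where
  "angle X P Y = vangle (X - P) (Y - P)"

definition is_triangle :: "complex \<Rightarrow> complex \<Rightarrow> complex \<Rightarrow> bool" where
  "is_triangle A B C \<longleftrightarrow> \<not> collinear {A, B, C}"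

definition bisector_feet ::
  "complex \<Rightarrow> complex \<Rightarrow> complex \<Rightarrow> complex \<Rightarrow> complex \<Rightarrow> complex \<Rightarrow> bool" where
  "bisector_feet A' B' C' A B C \<longleftrightarrow>
     is_triangle A' B' C' \<and>
     A \<in> closed_segment B' C' \<and> angle B' A' A = angle A A' C' \<and>
     B \<in> closed_segment C' A' \<and> angle C' B' B = angle B B' A' \<and>
     C \<in> closed_segment A' B' \<and> angle A' C' C = angle C C' B'"

end

theory Submission
  imports Defs "HOL-Number_Theory.Cong"
begin

text \<open>Take the bisector feet \<open>A = 0\<close>, \<open>B = 1\<close>, \<open>C = -1 + i\<close>. By the angle bisector theorem
  the vertices of a triangle with these feet are determined by its side lengths \<open>a\<close>, \<open>b\<close>,
  \<open>c\<close>, which then satisfy three polynomial equations; eliminating \<open>b\<close> shows that \<open>3 a / c\<close>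
  is a root of \<open>x\<^sup>4 + 14 x\<^sup>3 + 30 x\<^sup>2 - 202 x - 475\<close>. This quartic has no rational root
  (look modulo 3) and neither has its resolvent cubic (modulo 5), so it has no root in any
  tower of quadratic extensions of \<open>\<rat>\<close>. Points constructible from \<open>A\<close>, \<open>B\<close>, \<open>C\<close> and
  the distances between them lie in such towers, so the vertices are not constructible.
  A triangle with these feet exists because the equations have a positive solution.\<close>

section \<open>Towers of square roots\<close>

definition complex_subfield :: "complex set \<Rightarrow> bool" where
  "complex_subfield K \<longleftrightarrow> 0 \<in> K \<and> 1 \<in> K \<and>
     (\<forall>x\<in>K. \<forall>y\<in>K. x + y \<in> K \<and> x * y \<in> K) \<and> (\<forall>x\<in>K. - x \<in> K \<and> inverse x \<in> K)"

lemma complex_subfieldD: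
  assumes "complex_subfield K"
  shows "0 \<in> K" "1 \<in> K" "x \<in> K \<Longrightarrow> y \<in> K \<Longrightarrow> x + y \<in> K"
    "x \<in> K \<Longrightarrow> y \<in> K \<Longrightarrow> x * y \<in> K" "x \<in> K \<Longrightarrow> - x \<in> K"
    "x \<in> K \<Longrightarrow> inverse x \<in> K"
  using assms unfolding complex_subfield_def by auto

lemma complex_subfield_diff: "complex_subfield K \<Longrightarrow> x \<in> K \<Longrightarrow> y \<in> K \<Longrightarrow> x - y \<in> K"
  by (metis diff_conv_add_uminus complex_subfieldD(3,5))

lemma complex_subfield_divide: "complex_subfield K \<Longrightarrow> x \<in> K \<Longrightarrow> y \<in> K \<Longrightarrow> x / y \<in> K"
  by (simp add: divide_inverse complex_subfieldD(4,6))

lemma complex_subfield_power: "complex_subfield K \<Longrightarrow> x \<in> K \<Longrightarrow> x ^ n \<in> K"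
  by (induction n) (auto intro: complex_subfieldD)

lemma complex_subfield_of_nat: "complex_subfield K \<Longrightarrow> of_nat n \<in> K"
  by (induction n) (auto intro: complex_subfieldD)

lemma complex_subfield_numeral: "complex_subfield K \<Longrightarrow> numeral n \<in> K"
  using complex_subfield_of_nat[of K "numeral n"] by simp

lemmas complex_subfield_closed =
  complex_subfieldD complex_subfield_diff complex_subfield_divide
  complex_subfield_power complex_subfield_numeral

definition adjoin_sqrt :: "complex set \<Rightarrow> complex \<Rightarrow> complex set" where
  "adjoin_sqrt K r = {x + y * r | x y. x \<in> K \<and> y \<in> K}"

lemma subset_adjoin_sqrt: "complex_subfield K \<Longrightarrow> K \<subseteq> adjoin_sqrt K r"
  unfolding adjoin_sqrt_def using complex_subfieldD(1) by force

lemma sqrt_in_adjoin_sqrt: "complex_subfield K \<Longrightarrow> r \<in> adjoin_sqrt K r"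
  unfolding adjoin_sqrt_def using complex_subfieldD(1,2) by force

lemma adjoin_sqrt_mono: "K \<subseteq> L \<Longrightarrow> adjoin_sqrt K r \<subseteq> adjoin_sqrt L r"
  unfolding adjoin_sqrt_def by blast

lemma adjoin_sqrt_inverse:
  assumes K: "complex_subfield K" and r: "r * r \<in> K" and z: "z \<in> adjoin_sqrt K r"
  shows "inverse z \<in> adjoin_sqrt K r"
proof -
  obtain x y where xy: "z = x + y * r" "x \<in> K" "y \<in> K"
    using z unfolding adjoin_sqrt_def by blast
  define N where "N = x * x - y * y * (r * r)"
  have norm: "(x + y * r) * (x - y * r) = N" by (simp add: N_def algebra_simps)
  show ?thesis
  proof (cases "N = 0")
    case False
    then have "x + y * r \<noteq> 0" "x - y * r \<noteq> 0" using norm by auto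
    then have "inverse z = (x - y * r) / N"
      unfolding xy(1) norm[symmetric] by (simp add: divide_simps)
    also have "\<dots> = x / N + (- y / N) * r" by (simp add: diff_divide_distrib)
    finally have "inverse z = x / N + (- y / N) * r" .
    moreover have "N \<in> K" unfolding N_def using xy r
      by (simp add: complex_subfieldD(4)[OF K] complex_subfield_diff[OF K])
    then have "x / N \<in> K" "- y / N \<in> K" using xy by (auto intro: complex_subfield_closed[OF K])
    ultimately show ?thesis unfolding adjoin_sqrt_def by blast
  next
    case True
    have "z \<in> K"
    proof (cases "y = 0")
      case False
      with True have "(r - x / y) * (r + x / y) = 0" unfolding N_def by (simp add: field_simps)
      then have "r = x / y \<or> r = - (x / y)" by (simp add: eq_neg_iff_add_eq_0)
      moreover have "x / y \<in> K" using complex_subfield_divide[OF K xy(2,3)] .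
      ultimately have "r \<in> K" using complex_subfieldD(5)[OF K] by auto
      then show ?thesis using complex_subfieldD(3,4)[OF K] xy by simp
    qed (use xy in simp)
    then show ?thesis using complex_subfieldD(6)[OF K] subset_adjoin_sqrt[OF K] by blast
  qed
qed

lemma complex_subfield_adjoin_sqrt:
  assumes K: "complex_subfield K" and r: "r * r \<in> K"
  shows "complex_subfield (adjoin_sqrt K r)"
  unfolding complex_subfield_def
proof (intro conjI ballI)
  have mem: "x + y * r \<in> adjoin_sqrt K r" if "x \<in> K" "y \<in> K" for x y
    using that unfolding adjoin_sqrt_def by blast
  show "0 \<in> adjoin_sqrt K r" "1 \<in> adjoin_sqrt K r"
    using subset_adjoin_sqrt[OF K] complex_subfieldD(1,2)[OF K] by auto
  fix z w assume z: "z \<in> adjoin_sqrt K r" and w: "w \<in> adjoin_sqrt K r"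
  obtain x y where xy: "z = x + y * r" "x \<in> K" "y \<in> K" using z unfolding adjoin_sqrt_def by blast
  obtain x' y' where xy': "w = x' + y' * r" "x' \<in> K" "y' \<in> K" using w unfolding adjoin_sqrt_def by blast
  have "z + w = (x + x') + (y + y') * r" "z * w = (x * x' + y * y' * (r * r)) + (x * y' + y * x') * r"
    unfolding xy xy' by (simp_all add: algebra_simps)
  moreover have "(x + x') + (y + y') * r \<in> adjoin_sqrt K r"
    "(x * x' + y * y' * (r * r)) + (x * y' + y * x') * r \<in> adjoin_sqrt K r"
    by (intro mem complex_subfieldD(3,4)[OF K] xy xy' r)+
  ultimately show "z + w \<in> adjoin_sqrt K r" "z * w \<in> adjoin_sqrt K r" by simp_all
next
  fix z assume z: "z \<in> adjoin_sqrt K r"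
  obtain x y where xy: "z = x + y * r" "x \<in> K" "y \<in> K" using z unfolding adjoin_sqrt_def by blast
  have "- z = (- x) + (- y) * r" using xy by simp
  then show "- z \<in> adjoin_sqrt K r"
    using xy complex_subfieldD(5)[OF K] unfolding adjoin_sqrt_def by blast
  show "inverse z \<in> adjoin_sqrt K r" using adjoin_sqrt_inverse[OF K r z] .
qed

fun tower :: "complex set \<Rightarrow> complex list \<Rightarrow> complex set" where
  "tower K [] = K"
| "tower K (r # rs) = tower (adjoin_sqrt K r) rs"

fun sqrt_tower :: "complex set \<Rightarrow> complex list \<Rightarrow> bool" where
  "sqrt_tower K [] = True"
| "sqrt_tower K (r # rs) \<longleftrightarrow> r * r \<in> K \<and> sqrt_tower (adjoin_sqrt K r) rs"

lemma tower_append: "tower K (ps @ qs) = tower (tower K ps) qs"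
  by (induction ps arbitrary: K) auto

lemma sqrt_tower_append: "sqrt_tower K (ps @ qs) \<longleftrightarrow> sqrt_tower K ps \<and> sqrt_tower (tower K ps) qs"
  by (induction ps arbitrary: K) auto

lemma tower_mono: "K \<subseteq> L \<Longrightarrow> tower K rs \<subseteq> tower L rs"
  by (induction rs arbitrary: K L) (auto dest: adjoin_sqrt_mono)

lemma sqrt_tower_mono: "K \<subseteq> L \<Longrightarrow> sqrt_tower K rs \<Longrightarrow> sqrt_tower L rs"
  by (induction rs arbitrary: K L) (auto dest: adjoin_sqrt_mono)

lemma complex_subfield_tower: "complex_subfield K \<Longrightarrow> sqrt_tower K rs \<Longrightarrow> complex_subfield (tower K rs)"
  by (induction rs arbitrary: K) (auto intro: complex_subfield_adjoin_sqrt)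

lemma subset_tower: "complex_subfield K \<Longrightarrow> sqrt_tower K rs \<Longrightarrow> K \<subseteq> tower K rs"
proof (induction rs arbitrary: K)
  case (Cons r rs)
  then show ?case
    using subset_adjoin_sqrt[of K r] complex_subfield_adjoin_sqrt[of K r] by auto
qed simp

lemma cnj_adjoin_sqrt: "cnj ` adjoin_sqrt K r = adjoin_sqrt (cnj ` K) (cnj r)"
proof
  show "cnj ` adjoin_sqrt K r \<subseteq> adjoin_sqrt (cnj ` K) (cnj r)"
  proof
    fix z assume "z \<in> cnj ` adjoin_sqrt K r"
    then obtain x y where xy: "x \<in> K" "y \<in> K" "z = cnj (x + y * r)" unfolding adjoin_sqrt_def by blast
    then have "z = cnj x + cnj y * cnj r" by simp
    then show "z \<in> adjoin_sqrt (cnj ` K) (cnj r)" unfolding adjoin_sqrt_def using xy by blast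
  qed
next
  show "adjoin_sqrt (cnj ` K) (cnj r) \<subseteq> cnj ` adjoin_sqrt K r"
  proof
    fix z assume "z \<in> adjoin_sqrt (cnj ` K) (cnj r)"
    then obtain x y where xy: "x \<in> K" "y \<in> K" "z = cnj x + cnj y * cnj r" unfolding adjoin_sqrt_def by blast
    then have "z = cnj (x + y * r)" by simp
    moreover have "x + y * r \<in> adjoin_sqrt K r" unfolding adjoin_sqrt_def using xy by blast
    ultimately show "z \<in> cnj ` adjoin_sqrt K r" by blast
  qed
qed

lemma cnj_tower: "cnj ` tower K rs = tower (cnj ` K) (map cnj rs)"
  by (induction rs arbitrary: K) (auto simp: cnj_adjoin_sqrt)

lemma sqrt_tower_cnj: "sqrt_tower K rs \<Longrightarrow> sqrt_tower (cnj ` K) (map cnj rs)"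
proof (induction rs arbitrary: K)
  case (Cons r rs)
  then have "cnj r * cnj r \<in> cnj ` K" "sqrt_tower (cnj ` adjoin_sqrt K r) (map cnj rs)"
    by (metis complex_cnj_mult image_eqI sqrt_tower.simps(2), simp)
  then show ?case by (simp add: cnj_adjoin_sqrt)
qed simp

section \<open>Cubics and quartics without roots in a tower\<close>

definition conjugates :: "complex set \<Rightarrow> complex \<Rightarrow> complex \<Rightarrow> complex \<Rightarrow> bool" where
  "conjugates K r z w \<longleftrightarrow> (\<exists>x\<in>K. \<exists>y\<in>K. z = x + y * r \<and> w = x - y * r)"

lemma conjugates_intro: "x \<in> K \<Longrightarrow> y \<in> K \<Longrightarrow> conjugates K r (x + y * r) (x - y * r)"
  unfolding conjugates_def by blast

lemma conjugates_const: "complex_subfield K \<Longrightarrow> a \<in> K \<Longrightarrow> conjugates K r a a"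
  using conjugates_intro[of a K 0 r] complex_subfieldD(1) by force

lemma conjugates_add:
  assumes K: "complex_subfield K" and "conjugates K r z z'" "conjugates K r w w'"
  shows "conjugates K r (z + w) (z' + w')"
proof -
  obtain x y where xy: "x \<in> K" "y \<in> K" "z = x + y * r" "z' = x - y * r"
    using assms(2) unfolding conjugates_def by blast
  obtain u v where uv: "u \<in> K" "v \<in> K" "w = u + v * r" "w' = u - v * r"
    using assms(3) unfolding conjugates_def by blast
  have "z + w = (x + u) + (y + v) * r" "z' + w' = (x + u) - (y + v) * r"
    unfolding xy uv by (simp_all add: algebra_simps)
  then show ?thesis using conjugates_intro xy uv complex_subfieldD(3)[OF K] by metis
qed

lemma conjugates_mult:
  assumes K: "complex_subfield K" and r: "r * r \<in> K"
    and "conjugates K r z z'" "conjugates K r w w'"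
  shows "conjugates K r (z * w) (z' * w')"
proof -
  obtain x y where xy: "x \<in> K" "y \<in> K" "z = x + y * r" "z' = x - y * r"
    using assms(3) unfolding conjugates_def by blast
  obtain u v where uv: "u \<in> K" "v \<in> K" "w = u + v * r" "w' = u - v * r"
    using assms(4) unfolding conjugates_def by blast
  have "z * w = (x * u + y * v * (r * r)) + (x * v + y * u) * r"
       "z' * w' = (x * u + y * v * (r * r)) - (x * v + y * u) * r"
    unfolding xy uv by (simp_all add: algebra_simps)
  moreover have "x * u + y * v * (r * r) \<in> K" "x * v + y * u \<in> K"
    by (intro complex_subfieldD(3,4)[OF K] xy uv r)+
  ultimately show ?thesis using conjugates_intro by metis
qed

lemma conjugates_power:
  assumes K: "complex_subfield K" and r: "r * r \<in> K" and "conjugates K r z z'"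
  shows "conjugates K r (z ^ n) (z' ^ n)"
  by (induction n)
    (auto intro: conjugates_mult[OF K r] conjugates_const[OF K] complex_subfieldD(2)[OF K] assms(3))

lemma conjugates_eq_0:
  assumes K: "complex_subfield K" and "r \<notin> K" and "conjugates K r z z'" and "z = 0"
  shows "z' = 0"
proof -
  obtain x y where xy: "x \<in> K" "y \<in> K" "z = x + y * r" "z' = x - y * r"
    using assms(3) unfolding conjugates_def by blast
  have "y = 0"
  proof (rule ccontr)
    assume "y \<noteq> 0"
    then have "r = - x / y" using xy \<open>z = 0\<close> by (simp add: field_simps add_eq_0_iff)
    then show False
      using \<open>r \<notin> K\<close> xy complex_subfield_divide[OF K] complex_subfieldD(5)[OF K] by auto
  qed
  then show ?thesis using xy \<open>z = 0\<close> by simp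
qed

definition cubic :: "complex \<Rightarrow> complex \<Rightarrow> complex \<Rightarrow> complex \<Rightarrow> complex" where
  "cubic c2 c1 c0 z = z ^ 3 + c2 * z ^ 2 + c1 * z + c0"

definition quartic :: "complex \<Rightarrow> complex \<Rightarrow> complex \<Rightarrow> complex \<Rightarrow> complex \<Rightarrow> complex" where
  "quartic p3 p2 p1 p0 z = z ^ 4 + p3 * z ^ 3 + p2 * z ^ 2 + p1 * z + p0"

definition resolvent_cubic :: "complex \<Rightarrow> complex \<Rightarrow> complex \<Rightarrow> complex \<Rightarrow> complex \<Rightarrow> complex" where
  "resolvent_cubic p3 p2 p1 p0 =
     cubic (- p2) (p1 * p3 - 4 * p0) (- (p1 ^ 2 + p0 * p3 ^ 2 - 4 * p0 * p2))"

text \<open>The arguments are the coefficients of \<open>(t\<^sup>2 + s t + m) (t\<^sup>2 + s' t + m')\<close>: the resolvent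
  of a quartic that splits into two monic quadratics vanishes at \<open>m + m'\<close>.\<close>
lemma resolvent_cubic_root:
  "resolvent_cubic (s + s') (m + m' + s * s') (s * m' + s' * m) (m * m') (m + m') = 0"
  unfolding resolvent_cubic_def cubic_def
  by (simp add: algebra_simps power2_eq_square power3_eq_cube)

lemma conjugates_cubic:
  assumes K: "complex_subfield K" and r: "r * r \<in> K" and "c2 \<in> K" "c1 \<in> K" "c0 \<in> K"
    and "conjugates K r z z'"
  shows "conjugates K r (cubic c2 c1 c0 z) (cubic c2 c1 c0 z')"
  unfolding cubic_def
  by (intro conjugates_add[OF K] conjugates_mult[OF K r] conjugates_power[OF K r]
      conjugates_const[OF K] assms(3-6))

lemma conjugates_quartic:
  assumes K: "complex_subfield K" and r: "r * r \<in> K" and "p3 \<in> K" "p2 \<in> K" "p1 \<in> K" "p0 \<in> K"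
    and "conjugates K r z z'"
  shows "conjugates K r (quartic p3 p2 p1 p0 z) (quartic p3 p2 p1 p0 z')"
  unfolding quartic_def
  by (intro conjugates_add[OF K] conjugates_mult[OF K r] conjugates_power[OF K r]
      conjugates_const[OF K] assms(3-7))

lemma adjoin_sqrt_not_in_subfield:
  assumes K: "complex_subfield K" and z: "z \<in> adjoin_sqrt K r" and "z \<notin> K"
  obtains x y where "x \<in> K" "y \<in> K" "z = x + y * r" "r \<notin> K" "x + y * r \<noteq> x - y * r"
proof -
  obtain x y where xy: "z = x + y * r" "x \<in> K" "y \<in> K" using z unfolding adjoin_sqrt_def by blast
  have "r \<notin> K" using xy \<open>z \<notin> K\<close> complex_subfieldD(3,4)[OF K] by auto
  moreover have "y \<noteq> 0" "r \<noteq> 0" using xy \<open>z \<notin> K\<close> \<open>r \<notin> K\<close> complex_subfieldD(1)[OF K] by auto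
  ultimately show ?thesis using that xy by simp
qed

lemma cubic_no_root_adjoin_sqrt:
  assumes K: "complex_subfield K" and r: "r * r \<in> K" and c: "c2 \<in> K" "c1 \<in> K" "c0 \<in> K"
    and no_root: "\<forall>z\<in>K. cubic c2 c1 c0 z \<noteq> 0"
  shows "\<forall>z\<in>adjoin_sqrt K r. cubic c2 c1 c0 z \<noteq> 0"
proof (intro ballI notI)
  fix z assume z: "z \<in> adjoin_sqrt K r" and root: "cubic c2 c1 c0 z = 0"
  then have "z \<notin> K" using no_root by auto
  then obtain x y where xy: "x \<in> K" "y \<in> K" "z = x + y * r" "r \<notin> K"
    and uv: "x + y * r \<noteq> x - y * r"
    using adjoin_sqrt_not_in_subfield[OF K z] by blast
  define u where "u = x + y * r"
  define v where "v = x - y * r"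
  have Pu: "cubic c2 c1 c0 u = 0" using root xy u_def by simp
  have Pv: "cubic c2 c1 c0 v = 0"
    using conjugates_eq_0[OF K xy(4) conjugates_cubic[OF K r c conjugates_intro[OF xy(1,2)]]] Pu
    unfolding u_def v_def by simp
  define Q where "Q = u ^ 2 + u * v + v ^ 2 + c2 * (u + v) + c1"
  have "cubic c2 c1 c0 u - cubic c2 c1 c0 v = (u - v) * Q"
    unfolding cubic_def Q_def by (simp add: algebra_simps power2_eq_square power3_eq_cube)
  then have "Q = 0" using Pu Pv uv u_def v_def by simp
  txt \<open>Hence the third root \<open>- c2 - u - v\<close> lies in \<open>K\<close>.\<close>
  have "cubic c2 c1 c0 (- c2 - 2 * x) = cubic c2 c1 c0 u + (- c2 - 2 * x - u) * Q"
    unfolding cubic_def Q_def u_def v_def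
    by (simp add: algebra_simps power2_eq_square power3_eq_cube)
  then have "cubic c2 c1 c0 (- c2 - 2 * x) = 0" using Pu \<open>Q = 0\<close> by simp
  moreover have "- c2 - 2 * x \<in> K"
    using c xy by (simp add: complex_subfield_diff[OF K] complex_subfieldD(4,5)[OF K]
        complex_subfield_numeral[OF K])
  ultimately show False using no_root by auto
qed

lemma quartic_no_root_adjoin_sqrt:
  assumes K: "complex_subfield K" and r: "r * r \<in> K"
    and p: "p3 \<in> K" "p2 \<in> K" "p1 \<in> K" "p0 \<in> K"
    and no_root: "\<forall>z\<in>K. quartic p3 p2 p1 p0 z \<noteq> 0"
    and no_resolvent_root: "\<forall>z\<in>K. resolvent_cubic p3 p2 p1 p0 z \<noteq> 0"
  shows "\<forall>z\<in>adjoin_sqrt K r. quartic p3 p2 p1 p0 z \<noteq> 0"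
proof (intro ballI notI)
  note S = complex_subfieldD(3,4,5)[OF K] complex_subfield_diff[OF K]
    complex_subfield_numeral[OF K]
  fix z assume z: "z \<in> adjoin_sqrt K r" and root: "quartic p3 p2 p1 p0 z = 0"
  then have "z \<notin> K" using no_root by auto
  then obtain x y where xy: "x \<in> K" "y \<in> K" "z = x + y * r" "r \<notin> K"
    and uv: "x + y * r \<noteq> x - y * r"
    using adjoin_sqrt_not_in_subfield[OF K z] by blast
  define u where "u = x + y * r"
  define v where "v = x - y * r"
  have Pu: "quartic p3 p2 p1 p0 u = 0" using root xy u_def by simp
  have Pv: "quartic p3 p2 p1 p0 v = 0"
    using conjugates_eq_0[OF K xy(4) conjugates_quartic[OF K r p conjugates_intro[OF xy(1,2)]]] Pu
    unfolding u_def v_def by simp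
  txt \<open>Divide the quartic by \<open>(t - u) (t - v) = t\<^sup>2 + s t + m\<close>, which has coefficients in \<open>K\<close>;
    the remainder \<open>R1 t + R0\<close> vanishes at \<open>u\<close> and \<open>v\<close>, hence identically.\<close>
  define s where "s = - (2 * x)"
  define m where "m = x * x - y * y * (r * r)"
  define s' where "s' = p3 - s"
  define m' where "m' = p2 - m - s * s'"
  define R1 where "R1 = p1 - (s * m' + s' * m)"
  define R0 where "R0 = p0 - m * m'"
  have mK: "m \<in> K" "m' \<in> K" unfolding m_def m'_def s'_def s_def using S xy r p by simp_all
  have division: "quartic p3 p2 p1 p0 t = (t^2 + s * t + m) * (t^2 + s' * t + m') + R1 * t + R0"
    for t
    unfolding quartic_def R1_def R0_def m'_def s'_def
    by (simp add: algebra_simps power2_eq_square power3_eq_cube power4_eq_xxxx)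
  have "u^2 + s * u + m = 0" "v^2 + s * v + m = 0"
    unfolding u_def v_def s_def m_def by (simp_all add: algebra_simps power2_eq_square)
  then have lin: "R1 * u + R0 = 0" "R1 * v + R0 = 0"
    using division[of u] division[of v] Pu Pv by simp_all
  have "R1 * (u - v) = (R1 * u + R0) - (R1 * v + R0)" by (simp add: algebra_simps)
  then have R: "R1 = 0" "R0 = 0" using lin uv unfolding u_def v_def by simp_all
  have "p3 = s + s'" "p2 = m + m' + s * s'" "p1 = s * m' + s' * m" "p0 = m * m'"
    using R unfolding R1_def R0_def m'_def s'_def by simp_all
  then have "resolvent_cubic p3 p2 p1 p0 (m + m') = 0" using resolvent_cubic_root by simp
  moreover have "m + m' \<in> K" using S mK by simp
  ultimately show False using no_resolvent_root by auto
qed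

lemma quartic_no_root_tower:
  assumes "complex_subfield K" "sqrt_tower K rs" and p: "p3 \<in> K" "p2 \<in> K" "p1 \<in> K" "p0 \<in> K"
    and "\<forall>z\<in>K. quartic p3 p2 p1 p0 z \<noteq> 0" "\<forall>z\<in>K. resolvent_cubic p3 p2 p1 p0 z \<noteq> 0"
  shows "\<forall>z\<in>tower K rs. quartic p3 p2 p1 p0 z \<noteq> 0"
  using assms
proof (induction rs arbitrary: K)
  case (Cons r rs)
  then have K: "complex_subfield K" and r: "r * r \<in> K" and K': "complex_subfield (adjoin_sqrt K r)"
    using complex_subfield_adjoin_sqrt by auto
  have "- p2 \<in> K" "p1 * p3 - 4 * p0 \<in> K" "- (p1 ^ 2 + p0 * p3 ^ 2 - 4 * p0 * p2) \<in> K"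
    using Cons.prems(3-6) by (simp_all add: complex_subfieldD(3,4,5)[OF K]
        complex_subfield_diff[OF K] complex_subfield_power[OF K] complex_subfield_numeral[OF K])
  then have "\<forall>z\<in>adjoin_sqrt K r. resolvent_cubic p3 p2 p1 p0 z \<noteq> 0"
    using cubic_no_root_adjoin_sqrt[OF K r] Cons.prems(8) unfolding resolvent_cubic_def by blast
  moreover have "\<forall>z\<in>adjoin_sqrt K r. quartic p3 p2 p1 p0 z \<noteq> 0"
    using quartic_no_root_adjoin_sqrt[OF K r Cons.prems(3-8)] .
  ultimately show ?case
    using Cons.IH[OF K'] Cons.prems(2-6) subset_adjoin_sqrt[OF K] by auto
qed simp

section \<open>Rational roots\<close>

lemma Ints_if_root_of_monic:
  fixes q :: rat and c :: "nat \<Rightarrow> int"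
  assumes root: "q ^ Suc n + (\<Sum>i\<le>n. of_int (c i) * q ^ i) = 0"
  shows "q \<in> \<int>"
proof -
  obtain a b where q: "q = of_int a / of_int b" and "b > 0" and "coprime a b"
    by (cases q) (simp add: Fract_of_int_quotient)
  have qb: "q * of_int b = of_int a" using q \<open>b > 0\<close> by simp
  have scale: "of_int b ^ Suc n * q ^ i = of_int (a ^ i * b ^ (Suc n - i))" if "i \<le> Suc n" for i
  proof -
    have "of_int b ^ Suc n * q ^ i = (q * of_int b) ^ i * of_int b ^ (Suc n - i)"
      using that by (simp add: power_mult_distrib mult_ac flip: power_add)
    then show ?thesis by (simp add: qb)
  qed
  define rest where "rest = (\<Sum>i\<le>n. c i * (a ^ i * b ^ (Suc n - i)))"
  have "of_int b ^ Suc n * (\<Sum>i\<le>n. of_int (c i) * q ^ i) = (of_int rest :: rat)"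
    unfolding rest_def sum_distrib_left of_int_sum
    by (intro sum.cong refl) (simp add: mult.left_commute scale del: power_Suc)
  moreover have "of_int b ^ Suc n * q ^ Suc n = (of_int (a ^ Suc n) :: rat)"
    using scale[of "Suc n"] by simp
  ultimately have "(of_int (a ^ Suc n + rest) :: rat) =
      of_int b ^ Suc n * (q ^ Suc n + (\<Sum>i\<le>n. of_int (c i) * q ^ i))"
    by (simp add: distrib_left)
  then have "a ^ Suc n + rest = 0" using root by (simp only: mult_zero_right of_int_eq_0_iff)
  then have "a ^ Suc n = - rest" by simp
  moreover have "b dvd rest" unfolding rest_def by (intro dvd_sum) simp
  ultimately have "b dvd a ^ Suc n" by simp
  then have "is_unit b" using \<open>coprime a b\<close> by (meson coprime_common_divisor coprime_power_left_iff dvd_refl)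
  then have "b = 1" using \<open>b > 0\<close> by simp
  then show ?thesis using q by simp
qed

lemma quartic_no_rational_root: "(q :: rat) ^ 4 + 14 * q ^ 3 + 30 * q ^ 2 - 202 * q - 475 \<noteq> 0"
proof
  assume root: "q ^ 4 + 14 * q ^ 3 + 30 * q ^ 2 - 202 * q - 475 = 0"
  then have "q ^ Suc 3 + (\<Sum>i\<le>3. of_int ([-475, -202, 30, 14] ! i) * q ^ i) = 0"
    by (simp add: eval_nat_numeral algebra_simps)
  then obtain k where k: "q = of_int k" using Ints_if_root_of_monic Ints_cases by metis
  have "k ^ 4 + 14 * k ^ 3 + 30 * k ^ 2 - 202 * k - 475 = 0"
    using root unfolding k by (metis (mono_tags) of_int_eq_0_iff of_int_numeral
      of_int_power of_int_mult of_int_add of_int_diff)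
  moreover have "[k ^ 4 + 14 * k ^ 3 + 30 * k ^ 2 - 202 * k - 475
      = (k mod 3) ^ 4 + 14 * (k mod 3) ^ 3 + 30 * (k mod 3) ^ 2 - 202 * (k mod 3) - 475] (mod 3)"
    by (intro cong_add cong_diff cong_mult cong_pow cong_refl) (simp_all add: cong_def)
  moreover have "k mod 3 \<in> {0, 1, 2}" by auto
  ultimately show False by (auto simp: cong_def)
qed

lemma resolvent_no_rational_root: "(q :: rat) ^ 3 - 30 * q ^ 2 - 928 * q - 4704 \<noteq> 0"
proof
  assume root: "q ^ 3 - 30 * q ^ 2 - 928 * q - 4704 = 0"
  then have "q ^ Suc 2 + (\<Sum>i\<le>2. of_int ([-4704, -928, -30] ! i) * q ^ i) = 0"
    by (simp add: eval_nat_numeral algebra_simps)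
  then obtain k where k: "q = of_int k" using Ints_if_root_of_monic Ints_cases by metis
  have "k ^ 3 - 30 * k ^ 2 - 928 * k - 4704 = 0"
    using root unfolding k by (metis (mono_tags) of_int_eq_0_iff of_int_numeral
      of_int_power of_int_mult of_int_diff)
  moreover have "[k ^ 3 - 30 * k ^ 2 - 928 * k - 4704
      = (k mod 5) ^ 3 - 30 * (k mod 5) ^ 2 - 928 * (k mod 5) - 4704] (mod 5)"
    by (intro cong_add cong_diff cong_mult cong_pow cong_refl) (simp_all add: cong_def)
  moreover have "k mod 5 \<in> {0, 1, 2, 3, 4}" by auto
  ultimately show False by (auto simp: cong_def)
qed

section \<open>The quadratic closure of the rationals\<close>

definition quadratic_closure :: "complex set" where
  "quadratic_closure = {z. \<exists>rs. sqrt_tower \<rat> rs \<and> z \<in> tower \<rat> rs}"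

lemma complex_subfield_Rats: "complex_subfield \<rat>"
  unfolding complex_subfield_def by auto

lemma Rats_subset_quadratic_closure: "\<rat> \<subseteq> quadratic_closure"
  unfolding quadratic_closure_def by (auto intro!: exI[of _ "[]"])

lemma quadratic_closure_common_tower:
  assumes "z \<in> quadratic_closure" "w \<in> quadratic_closure"
  obtains rs where "sqrt_tower \<rat> rs" "z \<in> tower \<rat> rs" "w \<in> tower \<rat> rs"
proof -
  obtain ps where ps: "sqrt_tower \<rat> ps" "z \<in> tower \<rat> ps"
    using assms(1) unfolding quadratic_closure_def by blast
  obtain qs where qs: "sqrt_tower \<rat> qs" "w \<in> tower \<rat> qs"
    using assms(2) unfolding quadratic_closure_def by blast
  have sub: "\<rat> \<subseteq> tower \<rat> ps" using subset_tower[OF complex_subfield_Rats ps(1)] .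
  then have qs': "sqrt_tower (tower \<rat> ps) qs" using sqrt_tower_mono qs(1) by blast
  have "sqrt_tower \<rat> (ps @ qs)" using ps(1) qs' by (simp add: sqrt_tower_append)
  moreover have "z \<in> tower \<rat> (ps @ qs)"
    using subset_tower[OF complex_subfield_tower[OF complex_subfield_Rats ps(1)] qs'] ps(2)
    by (auto simp: tower_append)
  moreover have "w \<in> tower \<rat> (ps @ qs)" using tower_mono[OF sub] qs(2) by (auto simp: tower_append)
  ultimately show ?thesis using that by blast
qed

lemma complex_subfield_quadratic_closure: "complex_subfield quadratic_closure"
proof -
  have sub: "complex_subfield (tower \<rat> rs)" "tower \<rat> rs \<subseteq> quadratic_closure"
    if "sqrt_tower \<rat> rs" for rs
    using that complex_subfield_tower[OF complex_subfield_Rats] unfolding quadratic_closure_def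
    by auto
  show ?thesis unfolding complex_subfield_def
  proof (intro conjI ballI)
    show "0 \<in> quadratic_closure" "1 \<in> quadratic_closure"
      using Rats_subset_quadratic_closure by auto
  next
    fix z w assume "z \<in> quadratic_closure" "w \<in> quadratic_closure"
    then obtain rs where "sqrt_tower \<rat> rs" "z \<in> tower \<rat> rs" "w \<in> tower \<rat> rs"
      by (rule quadratic_closure_common_tower)
    then show "z + w \<in> quadratic_closure" "z * w \<in> quadratic_closure"
      using sub complex_subfieldD(3,4) by blast+
  next
    fix z assume "z \<in> quadratic_closure"
    then obtain rs where "sqrt_tower \<rat> rs" "z \<in> tower \<rat> rs"
      unfolding quadratic_closure_def by blast
    then show "- z \<in> quadratic_closure" "inverse z \<in> quadratic_closure"
      using sub complex_subfieldD(5,6) by blast+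
  qed
qed

lemmas quadratic_closure_add = complex_subfieldD(3)[OF complex_subfield_quadratic_closure]
  and quadratic_closure_mult = complex_subfieldD(4)[OF complex_subfield_quadratic_closure]
  and quadratic_closure_diff = complex_subfield_diff[OF complex_subfield_quadratic_closure]
  and quadratic_closure_divide = complex_subfield_divide[OF complex_subfield_quadratic_closure]
  and quadratic_closure_numeral = complex_subfield_numeral[OF complex_subfield_quadratic_closure]
  and quadratic_closure_closed = complex_subfield_closed[OF complex_subfield_quadratic_closure]

lemma quadratic_closure_sqrt:
  assumes "r * r \<in> quadratic_closure"
  shows "r \<in> quadratic_closure"
proof -
  obtain rs where rs: "sqrt_tower \<rat> rs" "r * r \<in> tower \<rat> rs"
    using assms unfolding quadratic_closure_def by blast
  have "sqrt_tower \<rat> (rs @ [r])" using rs by (simp add: sqrt_tower_append)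
  moreover have "r \<in> tower \<rat> (rs @ [r])"
    using sqrt_in_adjoin_sqrt[OF complex_subfield_tower[OF complex_subfield_Rats rs(1)]]
    by (simp add: tower_append)
  ultimately show ?thesis unfolding quadratic_closure_def by blast
qed

lemma quadratic_closure_cnj:
  assumes "z \<in> quadratic_closure"
  shows "cnj z \<in> quadratic_closure"
proof -
  have cnj_Rats: "cnj ` \<rat> = \<rat>"
  proof -
    have "cnj q = q" if "q \<in> \<rat>" for q using that by (rule Rats_cases') simp
    then have "cnj ` \<rat> = (\<lambda>q. q) ` \<rat>" by (rule image_cong[OF refl])
    then show ?thesis by simp
  qed
  obtain rs where rs: "sqrt_tower \<rat> rs" "z \<in> tower \<rat> rs"
    using assms unfolding quadratic_closure_def by blast
  have "cnj z \<in> tower \<rat> (map cnj rs)" using rs(2) cnj_tower[of \<rat> rs] cnj_Rats by (metis image_eqI)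
  moreover have "sqrt_tower \<rat> (map cnj rs)" using sqrt_tower_cnj[OF rs(1)] cnj_Rats by simp
  ultimately show ?thesis unfolding quadratic_closure_def by blast
qed

lemma ii_in_quadratic_closure: "\<i> \<in> quadratic_closure"
proof (rule quadratic_closure_sqrt)
  show "\<i> * \<i> \<in> quadratic_closure" using Rats_subset_quadratic_closure by auto
qed

lemma quadratic_closure_Re_Im_iff:
  "z \<in> quadratic_closure \<longleftrightarrow>
     complex_of_real (Re z) \<in> quadratic_closure \<and> complex_of_real (Im z) \<in> quadratic_closure"
proof
  assume z: "z \<in> quadratic_closure"
  have "complex_of_real (Re z) = (z + cnj z) / 2" "complex_of_real (Im z) = (z - cnj z) / (2 * \<i>)"
    by (simp_all add: complex_eq_iff)
  moreover have "(z + cnj z) / 2 \<in> quadratic_closure" "(z - cnj z) / (2 * \<i>) \<in> quadratic_closure"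
    using quadratic_closure_divide[OF quadratic_closure_add[OF z quadratic_closure_cnj[OF z]]
        quadratic_closure_numeral]
      quadratic_closure_divide[OF quadratic_closure_diff[OF z quadratic_closure_cnj[OF z]]
        quadratic_closure_mult[OF quadratic_closure_numeral ii_in_quadratic_closure]]
    by simp_all
  ultimately show "complex_of_real (Re z) \<in> quadratic_closure \<and> complex_of_real (Im z) \<in> quadratic_closure"
    by (simp only:)
next
  assume "complex_of_real (Re z) \<in> quadratic_closure \<and> complex_of_real (Im z) \<in> quadratic_closure"
  then have "complex_of_real (Re z) + \<i> * complex_of_real (Im z) \<in> quadratic_closure"
    using ii_in_quadratic_closure quadratic_closure_add quadratic_closure_mult by blast
  moreover have "complex_of_real (Re z) + \<i> * complex_of_real (Im z) = z" by (simp add: complex_eq_iff)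
  ultimately show "z \<in> quadratic_closure" by simp
qed

lemma quadratic_closure_norm:
  assumes "z \<in> quadratic_closure"
  shows "complex_of_real (cmod z) \<in> quadratic_closure"
  using assms quadratic_closure_sqrt quadratic_closure_cnj quadratic_closure_mult
  by (metis complex_norm_square of_real_power power2_eq_square)

lemma quadratic_closure_quadratic_root:
  assumes "a \<in> quadratic_closure" "b \<in> quadratic_closure" "c \<in> quadratic_closure"
    and "a \<noteq> 0" and "a * t ^ 2 + b * t + c = 0"
  shows "t \<in> quadratic_closure"
proof -
  have "(2 * a * t + b) * (2 * a * t + b) = 4 * a * (a * t ^ 2 + b * t + c) + (b * b - 4 * a * c)"
    by (simp add: algebra_simps power2_eq_square)
  then have "(2 * a * t + b) * (2 * a * t + b) \<in> quadratic_closure"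
    using assms quadratic_closure_closed by simp
  then have "2 * a * t + b \<in> quadratic_closure" by (rule quadratic_closure_sqrt)
  moreover have "t = (2 * a * t + b - b) / (2 * a)" using \<open>a \<noteq> 0\<close> by simp
  ultimately show ?thesis using assms(1,2) quadratic_closure_mult quadratic_closure_diff quadratic_closure_divide
      quadratic_closure_numeral by metis
qed

lemma quartic_no_root_quadratic_closure:
  assumes "z \<in> quadratic_closure"
  shows "z ^ 4 + 14 * z ^ 3 + 30 * z ^ 2 - 202 * z - 475 \<noteq> 0"
proof -
  have "quartic 14 30 (- 202) (- 475) q \<noteq> 0" "resolvent_cubic 14 30 (- 202) (- 475) q \<noteq> 0"
    if "q \<in> \<rat>" for q
  proof -
    obtain r where q: "q = of_rat r" using \<open>q \<in> \<rat>\<close> by (auto elim: Rats_cases)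
    have "quartic 14 30 (- 202) (- 475) q = of_rat (r ^ 4 + 14 * r ^ 3 + 30 * r ^ 2 - 202 * r - 475)"
      "resolvent_cubic 14 30 (- 202) (- 475) q = of_rat (r ^ 3 - 30 * r ^ 2 - 928 * r - 4704)"
      unfolding q quartic_def resolvent_cubic_def cubic_def
      by (simp_all add: of_rat_add of_rat_mult of_rat_power of_rat_diff)
    then show "quartic 14 30 (- 202) (- 475) q \<noteq> 0" "resolvent_cubic 14 30 (- 202) (- 475) q \<noteq> 0"
      using quartic_no_rational_root resolvent_no_rational_root by simp_all
  qed
  moreover obtain rs where "sqrt_tower \<rat> rs" "z \<in> tower \<rat> rs"
    using assms unfolding quadratic_closure_def by blast
  ultimately have "quartic 14 30 (- 202) (- 475) z \<noteq> 0"
    using quartic_no_root_tower[OF complex_subfield_Rats, of rs] by auto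
  then show ?thesis unfolding quartic_def by simp
qed

section \<open>Constructible points\<close>

lemma line_through_parallel_eq:
  assumes "a \<noteq> b" "c \<noteq> d" and parallel: "Im (cnj (d - c) * (b - a)) = 0"
    and "z \<in> line_through a b" "z \<in> line_through c d"
  shows "line_through a b = line_through c d"
proof -
  define u where "u = b - a"
  define v where "v = d - c"
  obtain t where t: "z = a + complex_of_real t * u"
    using \<open>z \<in> line_through a b\<close> unfolding line_through_def u_def by blast
  obtain s where s: "z = c + complex_of_real s * v"
    using \<open>z \<in> line_through c d\<close> unfolding line_through_def v_def by blast
  have "u \<noteq> 0" using \<open>a \<noteq> b\<close> u_def by simp
  have "Im (v / u) = 0" using parallel \<open>u \<noteq> 0\<close> unfolding u_def v_def
    by (simp add: Im_divide algebra_simps)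
  then obtain k where vk: "v = complex_of_real k * u"
    using \<open>u \<noteq> 0\<close> by (metis complex_is_Real_iff nonzero_eq_divide_eq of_real_Re)
  have "k \<noteq> 0" using vk \<open>c \<noteq> d\<close> v_def by auto
  have c: "c = a + complex_of_real (t - s * k) * u" using t s vk by (simp add: algebra_simps)
  show ?thesis
  proof
    show "line_through c d \<subseteq> line_through a b"
    proof
      fix w assume "w \<in> line_through c d"
      then obtain s' where "w = c + complex_of_real s' * v" unfolding line_through_def v_def by blast
      then have "w = a + complex_of_real (t - s * k + s' * k) * u" unfolding c vk
        by (simp add: algebra_simps)
      then show "w \<in> line_through a b" unfolding line_through_def u_def by blast
    qed
  next
    show "line_through a b \<subseteq> line_through c d"
    proof
      fix w assume "w \<in> line_through a b"
      then obtain t' where "w = a + complex_of_real t' * u" unfolding line_through_def u_def by blast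
      then have "w = c + complex_of_real ((t' - t + s * k) / k) * v" unfolding c vk
        using \<open>k \<noteq> 0\<close> by (simp add: field_simps)
      then show "w \<in> line_through c d" unfolding line_through_def v_def by blast
    qed
  qed
qed

lemma line_line_in_quadratic_closure:
  assumes "a \<in> quadratic_closure" "b \<in> quadratic_closure"
    "c \<in> quadratic_closure" "d \<in> quadratic_closure"
    and "a \<noteq> b" "c \<noteq> d" "line_through a b \<noteq> line_through c d"
    and "z \<in> line_through a b" "z \<in> line_through c d"
  shows "z \<in> quadratic_closure"
proof -
  note Q = quadratic_closure_closed
  define u where "u = b - a"
  define v where "v = d - c"
  obtain t where t: "z = a + complex_of_real t * u"
    using assms(8) unfolding line_through_def u_def by blast
  obtain s where s: "z = c + complex_of_real s * v"
    using assms(9) unfolding line_through_def v_def by blast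
  have "Im (cnj v * u) \<noteq> 0" using line_through_parallel_eq assms(5-9) unfolding u_def v_def by blast
  moreover have "t * Im (cnj v * u) = Im (cnj v * (c - a))"
  proof -
    have "complex_of_real t * u = c - a + complex_of_real s * v" using t s by (simp add: algebra_simps)
    then have "Im (cnj v * (complex_of_real t * u)) = Im (cnj v * (c - a + complex_of_real s * v))"
      by simp
    then show ?thesis by (simp add: algebra_simps)
  qed
  ultimately have "t = Im (cnj v * (c - a)) / Im (cnj v * u)"
    by (metis nonzero_mult_div_cancel_right)
  then have "complex_of_real t =
      complex_of_real (Im (cnj v * (c - a))) / complex_of_real (Im (cnj v * u))"
    by simp
  moreover have "cnj v * (c - a) \<in> quadratic_closure" "cnj v * u \<in> quadratic_closure"
    using assms(1-4) Q quadratic_closure_cnj unfolding u_def v_def by simp_all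
  ultimately have "complex_of_real t \<in> quadratic_closure"
    using quadratic_closure_Re_Im_iff quadratic_closure_divide by metis
  then show ?thesis unfolding t u_def using assms(1,2) Q by simp
qed

lemma line_circle_in_quadratic_closure:
  assumes "a \<in> quadratic_closure" "b \<in> quadratic_closure"
    "c \<in> quadratic_closure" "r \<in> quadratic_closure"
    and "a \<noteq> b" and "z \<in> line_through a b" "z \<in> circle_through c r"
  shows "z \<in> quadratic_closure"
proof -
  note Q = quadratic_closure_closed
  define u where "u = b - a"
  define w where "w = a - c"
  obtain t where t: "z = a + complex_of_real t * u"
    using assms(6) unfolding line_through_def u_def by blast
  have "cmod (w + complex_of_real t * u) = cmod (r - c)"
    using assms(7) unfolding circle_through_def t w_def dist_norm by (simp add: algebra_simps)
  then have "(w + complex_of_real t * u) * cnj (w + complex_of_real t * u) = (r - c) * cnj (r - c)"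
    by (metis complex_norm_square)
  then have "(u * cnj u) * complex_of_real t ^ 2 + (cnj u * w + u * cnj w) * complex_of_real t
      + (w * cnj w - (r - c) * cnj (r - c)) = 0"
    by (simp add: algebra_simps power2_eq_square)
  moreover have "u * cnj u \<noteq> 0" using \<open>a \<noteq> b\<close> u_def by simp
  moreover have "u \<in> quadratic_closure" "w \<in> quadratic_closure" "r - c \<in> quadratic_closure"
    using assms(1-4) Q unfolding u_def w_def by simp_all
  then have "u * cnj u \<in> quadratic_closure" "cnj u * w + u * cnj w \<in> quadratic_closure"
    "w * cnj w - (r - c) * cnj (r - c) \<in> quadratic_closure"
    using Q quadratic_closure_cnj by (simp_all del: complex_cnj_diff)
  ultimately have "complex_of_real t \<in> quadratic_closure"
    by (blast intro: quadratic_closure_quadratic_root)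
  then show ?thesis unfolding t u_def using assms(1,2) Q by simp
qed

lemma circle_circle_in_quadratic_closure:
  assumes "c1 \<in> quadratic_closure" "r1 \<in> quadratic_closure"
    "c2 \<in> quadratic_closure" "r2 \<in> quadratic_closure"
    and "circle_through c1 r1 \<noteq> circle_through c2 r2"
    and "z \<in> circle_through c1 r1" "z \<in> circle_through c2 r2"
  shows "z \<in> quadratic_closure"
proof -
  note Q = quadratic_closure_closed
  have d1: "cmod (z - c1) = cmod (r1 - c1)" and d2: "cmod (z - c2) = cmod (r2 - c2)"
    using assms(6,7) unfolding circle_through_def dist_norm by auto
  have "c1 \<noteq> c2"
  proof
    assume "c1 = c2"
    then have "circle_through c1 r1 = circle_through c2 r2"
      using d1 d2 unfolding circle_through_def dist_norm by auto
    then show False using assms(5) by simp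
  qed
  define e where "e = c2 - c1"
  define w where "w = z - c1"
  define \<rho>1 where "\<rho>1 = cmod (r1 - c1)"
  define \<rho>2 where "\<rho>2 = cmod (r2 - c2)"
  have e: "e \<in> quadratic_closure" "e \<noteq> 0" using assms(1,3) Q \<open>c1 \<noteq> c2\<close> unfolding e_def by auto
  have \<rho>: "complex_of_real \<rho>1 \<in> quadratic_closure" "complex_of_real \<rho>2 \<in> quadratic_closure"
    "complex_of_real (cmod e) \<in> quadratic_closure"
    using quadratic_closure_norm assms(1-4) Q e unfolding \<rho>1_def \<rho>2_def by simp_all
  txt \<open>In coordinates rotated by \<open>e\<close>, the radical axis gives the real part of \<open>cnj e * w\<close>
    and then the first circle its imaginary part up to sign.\<close>
  define p where "p = cnj e * w"
  have w1: "cmod w = \<rho>1" and w2: "cmod (w - e) = \<rho>2"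
    using d1 d2 unfolding w_def e_def \<rho>1_def \<rho>2_def by (simp_all add: algebra_simps)
  have "cmod (w - e) ^ 2 = cmod w ^ 2 - 2 * Re p + cmod e ^ 2"
    unfolding p_def cmod_power2 by (simp add: algebra_simps power2_eq_square)
  then have Re: "Re p = (\<rho>1 ^ 2 + cmod e ^ 2 - \<rho>2 ^ 2) / 2" using w1 w2 by simp
  have "cmod p = cmod e * \<rho>1" using w1 unfolding p_def by (simp add: norm_mult)
  then have "Im p ^ 2 = cmod e ^ 2 * \<rho>1 ^ 2 - Re p ^ 2"
    using cmod_power2[of p] by (simp add: power_mult_distrib)
  moreover have "complex_of_real (Re p) \<in> quadratic_closure" unfolding Re using \<rho> Q by simp
  ultimately have "complex_of_real (Im p) * complex_of_real (Im p) =
      complex_of_real (cmod e) ^ 2 * complex_of_real \<rho>1 ^ 2 - complex_of_real (Re p) ^ 2"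
    by (metis of_real_diff of_real_mult of_real_power power2_eq_square)
  then have "complex_of_real (Im p) * complex_of_real (Im p) \<in> quadratic_closure"
    using \<rho> Q \<open>complex_of_real (Re p) \<in> quadratic_closure\<close> by simp
  then have "p \<in> quadratic_closure"
    using quadratic_closure_sqrt quadratic_closure_Re_Im_iff
      \<open>complex_of_real (Re p) \<in> quadratic_closure\<close> by blast
  then have "w \<in> quadratic_closure"
    using e quadratic_closure_cnj quadratic_closure_divide unfolding p_def
    by (metis complex_cnj_zero_iff nonzero_mult_div_cancel_left)
  then show ?thesis using assms(1) quadratic_closure_add unfolding w_def by (metis diff_add_cancel)
qed

lemma constructible_subset_quadratic_closure:
  assumes "S \<subseteq> quadratic_closure"
  shows "constructible S \<subseteq> quadratic_closure"
proof
  fix z assume "z \<in> constructible S"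
  then show "z \<in> quadratic_closure"
  proof (induction rule: constructible.induct)
    case (base z)
    then show ?case using assms by blast
  next
    case (line_line a b c d z)
    then show ?case using line_line_in_quadratic_closure by blast
  next
    case (line_circle a b c r z)
    then show ?case using line_circle_in_quadratic_closure by blast
  next
    case (circle_circle c1 r1 c2 r2 z)
    then show ?case using circle_circle_in_quadratic_closure by blast
  qed
qed

section \<open>Angle bisectors\<close>

lemma abs_inner_divide_norms_le: "\<bar>(x \<bullet> y) / (norm x * norm y)\<bar> \<le> (1::real)"
proof (cases "norm x * norm y = 0")
  case False
  then show ?thesis using Cauchy_Schwarz_ineq2[of x y] by (simp add: abs_divide divide_le_eq_1)
qed auto

lemma vangle_eq_iff:
  "vangle u w = vangle w v \<longleftrightarrow> (u \<bullet> w) / (norm u * norm w) = (w \<bullet> v) / (norm w * norm v)"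
  unfolding vangle_def using arccos_eq_iff abs_inner_divide_norms_le by blast

lemma inner_bisector_identity:
  fixes u v :: "'a::real_inner"
  assumes "w = (1 - t) *\<^sub>R u + t *\<^sub>R v"
  shows "(u \<bullet> w) * norm v - (w \<bullet> v) * norm u =
           (norm u * norm v - u \<bullet> v) * ((1 - t) * norm u - t * norm v)"
proof -
  have "u \<bullet> u = norm u ^ 2" "v \<bullet> v = norm v ^ 2" by (simp_all add: power2_norm_eq_inner)
  then show ?thesis unfolding assms
    by (simp add: inner_add_left inner_add_right inner_commute[of v u] algebra_simps power2_eq_square)
qed

lemma angle_bisector_foot_iff:
  fixes P Q R X :: complex
  assumes "\<not> collinear {P, Q, R}"
  shows "X \<in> closed_segment Q R \<and> angle Q P X = angle X P R \<longleftrightarrow>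
           (dist R P + dist Q P) *\<^sub>R X = dist R P *\<^sub>R Q + dist Q P *\<^sub>R R"
    (is "?bisector \<longleftrightarrow> (?b + ?c) *\<^sub>R X = ?b *\<^sub>R Q + ?c *\<^sub>R R")
proof -
  define u where "u = Q - P"
  define v where "v = R - P"
  define w where "w = X - P"
  have bc: "?b = norm v" "?c = norm u" unfolding u_def v_def by (simp_all add: dist_norm)
  have "\<not> collinear {0, u, v}"
    using assms collinear_3[of Q P R] unfolding u_def v_def by (simp add: insert_commute)
  then have "u \<noteq> 0" "v \<noteq> 0" and "\<bar>u \<bullet> v\<bar> < norm u * norm v"
    using collinear_lemma[of u v] Cauchy_Schwarz_ineq2[of u v] norm_cauchy_schwarz_equal[of u v]
    by auto
  then have pos: "norm u > 0" "norm v > 0" "norm u * norm v - u \<bullet> v > 0" by auto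
  have angle: "angle Q P X = angle X P R \<longleftrightarrow>
      (u \<bullet> w) / (norm u * norm w) = (w \<bullet> v) / (norm w * norm v)"
    unfolding angle_def u_def v_def w_def by (rule vangle_eq_iff)
  show ?thesis
  proof
    assume ?bisector
    then obtain t where t: "X = (1 - t) *\<^sub>R Q + t *\<^sub>R R" and "0 \<le> t" "t \<le> 1"
      unfolding closed_segment_def by auto
    have w: "w = (1 - t) *\<^sub>R u + t *\<^sub>R v" unfolding u_def v_def w_def t by (simp add: algebra_simps)
    have "w \<noteq> 0"
    proof
      assume "w = 0"
      then have "{P, Q, R} \<subseteq> closed_segment Q R" using \<open>?bisector\<close> unfolding w_def by auto
      then show False using assms collinear_subset collinear_closed_segment by blast
    qed
    then have "(u \<bullet> w) * norm v - (w \<bullet> v) * norm u = 0"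
      using \<open>?bisector\<close> angle pos by (simp add: field_simps)
    then have "(1 - t) * norm u = t * norm v"
      using inner_bisector_identity[OF w] pos by simp
    then show "(?b + ?c) *\<^sub>R X = ?b *\<^sub>R Q + ?c *\<^sub>R R"
      unfolding bc t by (simp add: algebra_simps)
  next
    assume weights: "(?b + ?c) *\<^sub>R X = ?b *\<^sub>R Q + ?c *\<^sub>R R"
    define t where "t = norm u / (norm v + norm u)"
    have sum: "norm v + norm u > 0" using pos(1,2) by linarith
    then have "1 - t = norm v / (norm v + norm u)" unfolding t_def by (simp add: field_simps)
    moreover have X: "X = (norm v / (norm v + norm u)) *\<^sub>R Q + (norm u / (norm v + norm u)) *\<^sub>R R"
      using arg_cong[OF weights, of "scaleR (inverse (?b + ?c))"] pos unfolding bc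
      by (simp add: scaleR_add_right divide_inverse_commute)
    ultimately have X': "X = (1 - t) *\<^sub>R Q + t *\<^sub>R R" unfolding t_def by simp
    have "0 \<le> t" "t \<le> 1" unfolding t_def using sum norm_ge_zero[of v] by simp_all
    then have "X \<in> closed_segment Q R" using X' unfolding closed_segment_def by auto
    moreover have w: "w = (1 - t) *\<^sub>R u + t *\<^sub>R v" unfolding u_def v_def w_def X'
      by (simp add: algebra_simps)
    have "(1 - t) * norm u = t * norm v" using \<open>1 - t = _\<close> pos unfolding t_def by simp
    then have "(u \<bullet> w) * norm v = (w \<bullet> v) * norm u" using inner_bisector_identity[OF w] by simp
    then have "angle Q P X = angle X P R" unfolding angle using pos
      by (cases "w = 0") (simp_all add: field_simps)
    ultimately show ?bisector ..
  qed
qed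

lemma bisector_feet_iff:
  "bisector_feet A' B' C' A B C \<longleftrightarrow> is_triangle A' B' C' \<and>
     (dist B' A' + dist C' A') *\<^sub>R A = dist C' A' *\<^sub>R B' + dist B' A' *\<^sub>R C' \<and>
     (dist C' B' + dist A' B') *\<^sub>R B = dist A' B' *\<^sub>R C' + dist C' B' *\<^sub>R A' \<and>
     (dist A' C' + dist B' C') *\<^sub>R C = dist B' C' *\<^sub>R A' + dist A' C' *\<^sub>R B'"
proof -
  have "{B', C', A'} = {A', B', C'}" "{C', A', B'} = {A', B', C'}" by auto
  then show ?thesis
    unfolding bisector_feet_def is_triangle_def
    using angle_bisector_foot_iff[of A' B' C' A] angle_bisector_foot_iff[of B' C' A' B]
      angle_bisector_foot_iff[of C' A' B' C]
    by (auto simp: add.commute)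
qed

text \<open>The vertex \<open>A'\<close> of a triangle with side lengths \<open>a = |B'C'|\<close>, \<open>b = |C'A'|\<close>,
  \<open>c = |A'B'|\<close>, recovered from the feet \<open>A\<close>, \<open>B\<close>, \<open>C\<close> of its angle bisectors.\<close>
definition vertex_from_feet :: "real \<Rightarrow> real \<Rightarrow> real \<Rightarrow> complex \<Rightarrow> complex \<Rightarrow> complex \<Rightarrow> complex"
  where "vertex_from_feet a b c A B C =
    (of_real (a + c) * B + of_real (a + b) * C - of_real (b + c) * A) / of_real (2 * a)"

lemma vertex_from_feet_scale:
  assumes "s \<noteq> 0"
  shows "vertex_from_feet (s * a) (s * b) (s * c) A B C = vertex_from_feet a b c A B C"
proof -
  have "vertex_from_feet (s * a) (s * b) (s * c) A B C =
      (of_real s * (of_real (a + c) * B + of_real (a + b) * C - of_real (b + c) * A)) /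
      (of_real s * of_real (2 * a))"
    unfolding vertex_from_feet_def by (simp add: algebra_simps)
  then show ?thesis unfolding vertex_from_feet_def using assms by simp
qed

lemma vertex_from_feet_eqI:
  assumes "a \<noteq> 0"
    and "of_real (c + a) * B = of_real c * C' + of_real a * A'"
    and "of_real (a + b) * C = of_real a * A' + of_real b * B'"
    and "of_real (b + c) * A = of_real b * B' + of_real c * C'"
  shows "A' = vertex_from_feet a b c A B C"
proof -
  have "of_real (a + c) * B + of_real (a + b) * C - of_real (b + c) * A = of_real (2 * a) * A'"
    using assms(2-4) unfolding of_real_add of_real_mult of_real_numeral by algebra
  then show ?thesis unfolding vertex_from_feet_def using assms(1) by (simp add: field_simps)
qed

lemma weight_from_vertex_from_feet:
  assumes "b \<noteq> 0" "c \<noteq> 0"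
    and "B' = vertex_from_feet b c a B C A" "C' = vertex_from_feet c a b C A B"
  shows "of_real (b + c) * A = of_real b * B' + of_real c * C'"
proof -
  have "of_real (2 * b) * B' = of_real (b + a) * C + of_real (b + c) * A - of_real (c + a) * B"
    "of_real (2 * c) * C' = of_real (c + b) * A + of_real (c + a) * B - of_real (a + b) * C"
    using assms unfolding vertex_from_feet_def by simp_all
  then have "2 * (of_real (b + c) * A) = 2 * (of_real b * B' + of_real c * C')"
    unfolding of_real_add of_real_mult of_real_numeral by algebra
  then show ?thesis by (metis mult_left_cancel zero_neq_numeral)
qed

lemma weighted_feet_iff_vertex_from_feet:
  assumes "a \<noteq> 0" "b \<noteq> 0" "c \<noteq> 0"
  shows "(b + c) *\<^sub>R A = b *\<^sub>R B' + c *\<^sub>R C' \<and> (c + a) *\<^sub>R B = c *\<^sub>R C' + a *\<^sub>R A' \<and>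
           (a + b) *\<^sub>R C = a *\<^sub>R A' + b *\<^sub>R B' \<longleftrightarrow>
         A' = vertex_from_feet a b c A B C \<and> B' = vertex_from_feet b c a B C A \<and>
           C' = vertex_from_feet c a b C A B"
  unfolding scaleR_conv_of_real
  using vertex_from_feet_eqI[of a c B C' A' b C B' A] vertex_from_feet_eqI[of b a C A' B' c A C' B]
    vertex_from_feet_eqI[of c b A B' C' a B A' C] weight_from_vertex_from_feet[of b c B' a B C A C']
    weight_from_vertex_from_feet[of c a C' b C A B A'] weight_from_vertex_from_feet[of a b A' c A B C B']
    assms
  by blast

lemma bisector_feet_iff_vertex_from_feet:
  "bisector_feet A' B' C' A B C \<longleftrightarrow> is_triangle A' B' C' \<and>
     A' = vertex_from_feet (dist B' C') (dist C' A') (dist A' B') A B C \<and>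
     B' = vertex_from_feet (dist C' A') (dist A' B') (dist B' C') B C A \<and>
     C' = vertex_from_feet (dist A' B') (dist B' C') (dist C' A') C A B"
proof (cases "is_triangle A' B' C'")
  case True
  then have "A' \<noteq> B'" "B' \<noteq> C'" "C' \<noteq> A'"
    unfolding is_triangle_def by (auto simp: insert_commute collinear_2)
  then show ?thesis
    using weighted_feet_iff_vertex_from_feet[of "dist B' C'" "dist C' A'" "dist A' B'" A B' C' B A' C]
    unfolding bisector_feet_iff by (simp add: dist_commute add.commute)
qed (simp add: bisector_feet_def)

lemma collinear_Im_cnj_mult:
  fixes p q r :: complex
  assumes "collinear {p, q, r}"
  shows "Im (cnj (q - p) * (r - p)) = 0"
proof -
  obtain e where e: "\<forall>x\<in>{p, q, r}. \<forall>y\<in>{p, q, r}. \<exists>c. x - y = c *\<^sub>R e"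
    using assms unfolding collinear_def by blast
  obtain c1 c2 where "q - p = c1 *\<^sub>R e" "r - p = c2 *\<^sub>R e" using e by blast
  then show ?thesis by (simp add: scaleR_conv_of_real algebra_simps)
qed

section \<open>The triangle with bisector feet \<open>0\<close>, \<open>1\<close>, \<open>-1 + i\<close>\<close>

lemma side_lengths_vertex_from_feet:
  fixes a b c :: real
  assumes "a > 0" "b > 0" "c > 0"
  defines "A' \<equiv> vertex_from_feet a b c 0 1 (Complex (-1) 1)"
    and "B' \<equiv> vertex_from_feet b c a 1 (Complex (-1) 1) 0"
    and "C' \<equiv> vertex_from_feet c a b (Complex (-1) 1) 0 1"
  shows "(2 * b * c * dist B' C') ^ 2 = (b + c) ^ 2 * ((2 * a + b + c) ^ 2 + (a + b) ^ 2)"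
    and "(2 * a * c * dist C' A') ^ 2 = (a + c) ^ 2 * ((2 * a + b - c) ^ 2 + (a + b) ^ 2)"
    and "(2 * a * b * dist A' B') ^ 2 = (a + b) ^ 2 * ((2 * a - b + c) ^ 2 + (a - b) ^ 2)"
    and "is_triangle A' B' C'"
proof -
  have A': "A' = Complex ((c - b) / (2 * a)) ((a + b) / (2 * a))"
    and B': "B' = Complex (- (2 * a + b + c) / (2 * b)) ((a + b) / (2 * b))"
    and C': "C' = Complex ((2 * a + b + c) / (2 * c)) (- (a + b) / (2 * c))"
    unfolding A'_def B'_def C'_def vertex_from_feet_def using assms(1-3)
    by (simp_all add: complex_eq_iff field_simps)
  show "(2 * b * c * dist B' C') ^ 2 = (b + c) ^ 2 * ((2 * a + b + c) ^ 2 + (a + b) ^ 2)"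
    "(2 * a * c * dist C' A') ^ 2 = (a + c) ^ 2 * ((2 * a + b - c) ^ 2 + (a + b) ^ 2)"
    "(2 * a * b * dist A' B') ^ 2 = (a + b) ^ 2 * ((2 * a - b + c) ^ 2 + (a - b) ^ 2)"
    unfolding A' B' C' dist_norm power_mult_distrib cmod_power2 using assms(1-3)
    by (simp_all add: field_simps power2_eq_square)
  have "Im (cnj (B' - A') * (C' - A')) = (a + b) * (a + c) * (b + c) / (2 * a * b * c)"
    unfolding A' B' C' using assms(1-3) by (simp add: field_simps)
  moreover have "(a + b) * (a + c) * (b + c) / (2 * a * b * c) > 0" using assms(1-3) by simp
  ultimately show "is_triangle A' B' C'"
    unfolding is_triangle_def using collinear_Im_cnj_mult by fastforce
qed

text \<open>Elimination of \<open>b\<close> from the side equations below: a combination of their two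
  differences with polynomial coefficients.\<close>
lemma side_equations_elimination:
  fixes a b c :: real
  shows "(48550*c^6 + 64150*b*c^5 + 71400*b^2*c^4 + 99757*a*c^5 + 146946*a*b*c^4 + 155014*a*b^2*c^3 - 13136*a*b^3*c^2 - 39456*a*b^4*c - 22137*a^2*c^4 + 58596*a^2*b*c^3 + 19038*a^2*b^2*c^2 - 21776*a^2*b^3*c - 39456*a^2*b^4 - 145032*a^3*c^3 - 42580*a^3*b*c^2 - 35398*a^3*b^2*c - 8640*a^3*b^3 - 28438*a^4*c^2 - 20810*a^4*b*c + 29178*a^4*b^2 + 45275*a^5*c - 2430*a^5*b + 2025*a^6) * ((a+c)^2*((2*a+b-c)^2+(a+b)^2) - (b+c)^2*((2*a+b+c)^2+(a+b)^2))
    + (- 59375*c^6 - 53800*b*c^5 - 56200*b^2*c^4 - 17850*b^3*c^3 - 129550*a*c^5 - 120142*a*b*c^4 - 82993*a*b^2*c^3 - 10432*a*b^3*c^2 + 25478*a*b^4*c + 9864*a*b^5 + 29183*a^2*c^4 - 23852*a^2*b*c^3 + 23675*a^2*b^2*c^2 + 35382*a^2*b^3*c + 19422*a^2*b^4 + 164291*a^3*c^3 + 65954*a^3*b*c^2 + 909*a^3*b^2*c - 5364*a^3*b^3 + 8222*a^4*c^2 - 25047*a^4*b^2 - 38255*a^5*c) * ((a+b)^2*((2*a-b+c)^2+(a-b)^2) - (b+c)^2*((2*a+b+c)^2+(a+b)^2))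
    = 125 * (a+c)^3 * (a-c)^3 * (81*a^4+378*a^3*c+270*a^2*c^2-606*a*c^3-475*c^4)"
  by algebra

lemma side_equations_imp_quartic:
  fixes a b c :: real
  assumes "a > 0" "b > 0" "c > 0"
    and K1: "(2 * a * b * c) ^ 2 = (b + c) ^ 2 * ((2 * a + b + c) ^ 2 + (a + b) ^ 2)"
    and K2: "(2 * a * b * c) ^ 2 = (a + c) ^ 2 * ((2 * a + b - c) ^ 2 + (a + b) ^ 2)"
    and K3: "(2 * a * b * c) ^ 2 = (a + b) ^ 2 * ((2 * a - b + c) ^ 2 + (a - b) ^ 2)"
  shows "81 * a ^ 4 + 378 * a ^ 3 * c + 270 * a ^ 2 * c ^ 2 - 606 * a * c ^ 3 - 475 * c ^ 4 = 0"
proof -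
  have g1: "(a+c)^2*((2*a+b-c)^2+(a+b)^2) - (b+c)^2*((2*a+b+c)^2+(a+b)^2) = 0"
    and g2: "(a+b)^2*((2*a-b+c)^2+(a-b)^2) - (b+c)^2*((2*a+b+c)^2+(a+b)^2) = 0"
    using K1 K2 K3 by simp_all
  have "a \<noteq> c"
  proof
    assume "a = c"
    then have "(a + b) ^ 2 * (2 * a ^ 2 + 8 * a * b + 2 * b ^ 2) = 0"
      using g1 by (simp add: algebra_simps power2_eq_square)
    moreover have "(a + b) ^ 2 * (2 * a ^ 2 + 8 * a * b + 2 * b ^ 2) > 0"
      using \<open>a > 0\<close> \<open>b > 0\<close> by (simp add: add_pos_pos)
    ultimately show False by linarith
  qed
  moreover have "125 * (a + c) ^ 3 * (a - c) ^ 3 *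
      (81 * a ^ 4 + 378 * a ^ 3 * c + 270 * a ^ 2 * c ^ 2 - 606 * a * c ^ 3 - 475 * c ^ 4) = 0"
    using side_equations_elimination[of c b a] g1 g2 by simp
  ultimately show ?thesis using \<open>a > 0\<close> \<open>c > 0\<close> by simp
qed

lemma bisector_feet_not_in_quadratic_closure:
  assumes feet: "bisector_feet A' B' C' 0 1 (Complex (-1) 1)"
    and "A' \<in> quadratic_closure" "B' \<in> quadratic_closure" "C' \<in> quadratic_closure"
  shows False
proof -
  define a b c where "a = dist B' C'" and "b = dist C' A'" and "c = dist A' B'"
  have "is_triangle A' B' C'" and vertices: "A' = vertex_from_feet a b c 0 1 (Complex (-1) 1)"
    "B' = vertex_from_feet b c a 1 (Complex (-1) 1) 0" "C' = vertex_from_feet c a b (Complex (-1) 1) 0 1"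
    using feet unfolding bisector_feet_iff_vertex_from_feet a_def b_def c_def by simp_all
  then have "A' \<noteq> B'" "B' \<noteq> C'" "C' \<noteq> A'"
    unfolding is_triangle_def by (auto simp: insert_commute collinear_2)
  then have pos: "a > 0" "b > 0" "c > 0" unfolding a_def b_def c_def by simp_all
  note sides = side_lengths_vertex_from_feet[OF pos, folded vertices]
  have "81 * a ^ 4 + 378 * a ^ 3 * c + 270 * a ^ 2 * c ^ 2 - 606 * a * c ^ 3 - 475 * c ^ 4 = 0"
    using side_equations_imp_quartic[OF pos] sides(1-3) unfolding a_def b_def c_def
    by (simp add: mult_ac)
  moreover define u where "u = 3 * a / c"
  then have "3 * a = u * c" using pos by simp
  then have "81 * a ^ 4 + 378 * a ^ 3 * c + 270 * a ^ 2 * c ^ 2 - 606 * a * c ^ 3 - 475 * c ^ 4 =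
      c ^ 4 * (u ^ 4 + 14 * u ^ 3 + 30 * u ^ 2 - 202 * u - 475)"
    by algebra
  ultimately have "u ^ 4 + 14 * u ^ 3 + 30 * u ^ 2 - 202 * u - 475 = 0" using pos by simp
  then have "complex_of_real u ^ 4 + 14 * complex_of_real u ^ 3 + 30 * complex_of_real u ^ 2
      - 202 * complex_of_real u - 475 = 0"
    by (metis (mono_tags) of_real_0 of_real_add of_real_diff of_real_mult of_real_numeral of_real_power)
  moreover have "complex_of_real u \<in> quadratic_closure"
    using quadratic_closure_norm quadratic_closure_closed assms(2-4)
    unfolding u_def a_def c_def dist_norm by simp
  ultimately show False using quartic_no_root_quadratic_closure by blast
qed

lemma bisector_feet_of_side_equations:
  fixes a b c :: real
  assumes pos: "a > 0" "b > 0" "c > 0"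
    and k12: "(b + c) ^ 2 * ((2 * a + b + c) ^ 2 + (a + b) ^ 2) = (a + c) ^ 2 * ((2 * a + b - c) ^ 2 + (a + b) ^ 2)"
    and k13: "(b + c) ^ 2 * ((2 * a + b + c) ^ 2 + (a + b) ^ 2) = (a + b) ^ 2 * ((2 * a - b + c) ^ 2 + (a - b) ^ 2)"
  shows "bisector_feet (vertex_from_feet a b c 0 1 (Complex (-1) 1))
           (vertex_from_feet b c a 1 (Complex (-1) 1) 0) (vertex_from_feet c a b (Complex (-1) 1) 0 1)
           0 1 (Complex (-1) 1)"
proof -
  define A' where "A' = vertex_from_feet a b c 0 1 (Complex (-1) 1)"
  define B' where "B' = vertex_from_feet b c a 1 (Complex (-1) 1) 0"
  define C' where "C' = vertex_from_feet c a b (Complex (-1) 1) 0 1"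
  define K where "K = (b + c) ^ 2 * ((2 * a + b + c) ^ 2 + (a + b) ^ 2)"
  define s where "s = sqrt K / (2 * a * b * c)"
  have "K > 0" unfolding K_def using pos by (intro mult_pos_pos) (auto intro: add_pos_nonneg)
  then have "s > 0" unfolding s_def using pos by simp
  have dist_eq: "d = sqrt K / m" if "(m * d) ^ 2 = K" "m > 0" "d \<ge> 0" for d m :: real
  proof -
    have "sqrt K = m * d" unfolding that(1)[symmetric] real_sqrt_abs using that(2,3) by simp
    then show ?thesis using \<open>m > 0\<close> by simp
  qed
  note sides = side_lengths_vertex_from_feet[OF pos, folded A'_def B'_def C'_def]
  have "dist B' C' = s * a" "dist C' A' = s * b" "dist A' B' = s * c"
    using dist_eq[OF sides(1)[folded K_def]] dist_eq[OF sides(2)[folded k12, folded K_def]]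
      dist_eq[OF sides(3)[folded k13, folded K_def]] pos
    unfolding s_def by (simp_all add: field_simps)
  then show ?thesis
    unfolding bisector_feet_iff_vertex_from_feet A'_def[symmetric] B'_def[symmetric] C'_def[symmetric]
    using sides(4) vertex_from_feet_scale \<open>s > 0\<close> unfolding A'_def B'_def C'_def by simp
qed

lemma bisector_feet_exist: "\<exists>A' B' C'. bisector_feet A' B' C' 0 1 (Complex (-1) 1)"
proof -
  define f where "f u = u ^ 4 + 14 * u ^ 3 + 30 * u ^ 2 - 202 * u - 475" for u :: real
  have "f 3.58 \<le> 0" "0 \<le> f 3.6" unfolding f_def by (simp_all add: power_numeral_reduce)
  moreover have "\<forall>x. 3.58 \<le> x \<and> x \<le> 3.6 \<longrightarrow> isCont f x" unfolding f_def
    by (intro allI impI continuous_intros)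
  ultimately obtain u where u: "3.58 \<le> u" "u \<le> 3.6" and fu: "f u = 0"
    using IVT[of f "3.58" 0 "3.6"] by auto
  have root: "u ^ 4 + 14 * u ^ 3 + 30 * u ^ 2 - 202 * u - 475 = 0" using fu unfolding f_def .
  txt \<open>With \<open>a = u\<close> and \<open>c = 3\<close>, this \<open>b\<close> is the common root of the two side equations.\<close>
  define b where "b = (67 + 15 * u - 5 * u ^ 2 - u ^ 3) / 16"
  have "u ^ 2 \<le> 3.6 ^ 2" "u ^ 3 \<le> 3.6 ^ 3" using u by (intro power_mono; simp)+
  then have "b > 0" "u > 0" unfolding b_def using u by (simp_all add: power_numeral_reduce)
  moreover have b16: "16 * b = 67 + 15 * u - 5 * u ^ 2 - u ^ 3" unfolding b_def by simp
  have "(b + 3) ^ 2 * ((2 * u + b + 3) ^ 2 + (u + b) ^ 2) = (u + 3) ^ 2 * ((2 * u + b - 3) ^ 2 + (u + b) ^ 2)"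
    "(b + 3) ^ 2 * ((2 * u + b + 3) ^ 2 + (u + b) ^ 2) = (u + b) ^ 2 * ((2 * u - b + 3) ^ 2 + (u - b) ^ 2)"
    using root b16 by algebra+
  ultimately show ?thesis using bisector_feet_of_side_equations[of u b 3] by auto
qed

theorem mainTheorem1:
  shows "\<exists>A B C :: complex. is_triangle A B C \<and>
           (\<exists>A' B' C'. bisector_feet A' B' C' A B C) \<and>
           \<not> (\<exists>A' B' C'. bisector_feet A' B' C' A B C \<and>
                 A' \<in> constructible {A, B, C} \<and> B' \<in> constructible {A, B, C} \<and>
                 C' \<in> constructible {A, B, C})"
proof -
  have "Im (cnj (1 - 0) * (Complex (-1) 1 - 0)) \<noteq> 0" by simp
  then have "is_triangle 0 1 (Complex (-1) 1)"
    unfolding is_triangle_def using collinear_Im_cnj_mult by blast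
  moreover have "Complex (-1) 1 \<in> quadratic_closure"
    using quadratic_closure_closed by (simp add: quadratic_closure_Re_Im_iff[of "Complex (-1) 1"])
  then have "constructible {0, 1, Complex (-1) 1} \<subseteq> quadratic_closure"
    using quadratic_closure_closed by (intro constructible_subset_quadratic_closure) auto
  ultimately show ?thesis
    using bisector_feet_exist bisector_feet_not_in_quadratic_closure by blast
qed

end
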